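(* Consider the following setting. Labels $c$ take values in a finite set $\{1,\ldots,C\}$. For each hyperparameter vector $\lambda=[\lambda^{\rm s},\lambda^{\rm w},\lambda^{\rm d}]$ (with entries in $\mathbb{R}\cup\{\infty\}$), input signal $\mathbf u$ and channel/noise realization $\mathbf h$, the (fixed, pre-trained) wake-up-radio-aided neuromorphic split computing system outputs a decision set $\mathcal C(\mathbf u,\mathbf h,\lambda)\subseteq\{1,\ldots,C\}$ and a wake-up detection time $\hat l^{\rm det}(\mathbf u,\mathbf h,\lambda)$. Let $\ell(c,\mathcal C)\in[0,1]$ be a loss function with $\ell(c,\mathcal C)=0$ whenever $c\in\mathcal C$, and define the expected loss $L(\lambda)=\mathbb E[\ell(c,\mathcal C(\mathbf u,\mathbf h,\lambda))]$, where $(\mathbf u,c)\sim p(\mathbf u,c)$ and $\mathbf h\sim p(\mathbf h)$ independently. The hyperparameter $\lambda^{\rm sec}=[\infty,\infty,\infty]$ yields $\mathcal C(\mathbf u,\mathbf h,\lambda^{\rm sec})=\{1,\ldots,C\}$ for all $\mathbf u,\mathbf h$. Let $\mathcal D^{\rm DT}$ and $\mathcal D^{\rm PT}=\{(\mathbf u_n,c_n)\}_{n=1}^{|\mathcal D^{\rm PT}|}$ be two disjoint datasets, and let simulated channels $\{\tilde{\mathbf h}_n\sim\tilde p(\mathbf h)\}_{n=1}^{|\mathcal D^{\rm DT}|}$ be generated from an arbitrary simulator distribution $\tilde p$. Assume the pairs in $\mathcal D^{\rm PT}$ are i.i.d. from $p(\mathbf u,c)$, the true channels $\{\mathbf h_n\}_{n=1}^{|\mathcal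 D^{\rm PT}|}$ are i.i.d. from $p(\mathbf h)$, and $(\mathcal D^{\rm PT},\{\mathbf h_n\})$ is independent of $(\mathcal D^{\rm DT},\{\tilde{\mathbf h}_n\})$. Fix $\alpha\in[0,1]$, $\delta\in(0,1)$, $\gamma\ge 0$, $P^{\rm on}>0$, and integers $L^{\rm max},\delta^{\rm wake}$. DT-LTT selects $\lambda^*$ as follows. (i) Using only $\mathcal D^{\rm DT}$ and $\{\tilde{\mathbf h}_n\}$, compute $\hat L^{\rm DT}(\lambda)=\frac{1}{|\mathcal D^{\rm DT}|}\sum_{n}\ell(c_n,\mathcal C(\mathbf u_n,\tilde{\mathbf h}_n,\lambda))$, $\hat E^{\rm DT}(\lambda)=P^{\rm on}\big(L^{\rm max}-\frac{1}{|\mathcal D^{\rm DT}|}\sum_n\hat l^{\rm det}(\mathbf u_n,\tilde{\mathbf h}_n,\lambda)-\delta^{\rm wake}+1\big)$, $\hat I^{\rm DT}(\lambda)=\frac{1}{|\mathcal D^{\rm DT}|}\sum_n|\mathcal C(\mathbf u_n,\tilde{\mathbf h}_n,\lambda)|$ (sums over $(\mathbf u_n,c_n)\in\mathcal D^{\rm DT}$), and choose a finite set $\Lambda$ of candidates (e.g. those whose pair $(\hat L^{\rm DT}(\lambda),\hat E^{\rm DT}(\lambda)+\gamma\hat I^{\rm DT}(\lambda))$ lies on the Pareto front), ordered as $\lambda_1,\ldots,\lambda_{|\Lambda|}$ with $\hat L^{\rm DT}(\lambda_1)\le\cdots\le\hat L^{\rm DT}(\lambda_{|\Lambda|})$. (ii)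 For $j=1,2,\ldots$, compute on the true channels $\hat L^{\rm PT}(\lambda_j)=\frac{1}{|\mathcal D^{\rm PT}|}\sum_{n}\ell(c_n,\mathcal C(\mathbf u_n,\mathbf h_n,\lambda_j))$ and analogously $\hat E^{\rm PT}(\lambda_j)$, $\hat I^{\rm PT}(\lambda_j)$, and stop at the first index $j^{\rm stop}$ with $\hat L^{\rm PT}(\lambda_{j^{\rm stop}})>\psi(\alpha,\delta)$, where $\psi(\alpha,\delta)=\alpha-\sqrt{\frac{-\ln\delta}{2|\mathcal D^{\rm PT}|}}$ (set $j^{\rm stop}=|\Lambda|+1$ if no such index exists). (iii) If $j^{\rm stop}=1$, set $\lambda^*=\lambda^{\rm sec}$; otherwise set $\lambda^*=\lambda_{j^*}$ with $j^*\in\arg\min_{j\in\{1,\ldots,j^{\rm stop}-1\}}\{\hat E^{\rm PT}(\lambda_j)+\gamma\hat I^{\rm PT}(\lambda_j)\}$. Then, for any realization of $\mathcal D^{\rm DT}$ and of the simulated channels $\{\tilde{\mathbf h}_n\}$, and irrespective of $\tilde p$, $p(\mathbf u,c)$ and $p(\mathbf h)$, $$\Pr[L(\lambda^* )\le\alpha]\ge 1-\delta,$$ where the probability is over the randomness of $\mathcal D^{\rm PT}$ and the true channels $\{\mathbf h_n\}_{n=1}^{|\mathcal D^{\rm PT}|}$.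
   Context: The system: a transmitter senses a time series, detects the start of a signal of interest via a CUSUM statistic compared to threshold $\lambda^{\rm s}$, sends a wake-up signal which a wake-up receiver detects via a matched filter compared to threshold $\lambda^{\rm w}$ (producing detection time $\hat l^{\rm det}$), after which a main receiver with a pre-trained spiking neural network outputs class scores $s_c$ and the decision set $\mathcal C=\{c: s_c\le\lambda^{\rm d}\}$. All networks are fixed; only $\lambda$ is selected. In the paper the loss is the 0-1 miscoverage loss $\ell(c,\mathcal C)=\mathbb 1(c\notin\mathcal C)$. *)

theory Defs
  imports "HOL-Probability.Probability"
begin

type_synonym hyp = "ereal \<times> ereal \<times> ereal"

definition lam_sec :: hyp where
  "lam_sec = (\<infinity>, \<infinity>, \<infinity>)"

text \<open>A data sample is ((u, c), h): input, label, channel realization.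
  Empirical loss, energy and inefficiency over a list of samples.\<close>

definition emp_loss ::
  "(nat \<Rightarrow> nat set \<Rightarrow> real) \<Rightarrow> ('u \<Rightarrow> 'h \<Rightarrow> hyp \<Rightarrow> nat set)
   \<Rightarrow> (('u \<times> nat) \<times> 'h) list \<Rightarrow> hyp \<Rightarrow> real" where
  "emp_loss loss Cs D lam =
     sum_list (map (\<lambda>((u, c), h). loss c (Cs u h lam)) D) / real (length D)"

definition emp_energy ::
  "real \<Rightarrow> int \<Rightarrow> int \<Rightarrow> ('u \<Rightarrow> 'h \<Rightarrow> hyp \<Rightarrow> int)
   \<Rightarrow> (('u \<times> nat) \<times> 'h) list \<Rightarrow> hyp \<Rightarrow> real" where
  "emp_energy Pon Lmax dwake ldet D lam =
     Pon * (real_of_int Lmax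
            - sum_list (map (\<lambda>((u, c), h). real_of_int (ldet u h lam)) D) / real (length D)
            - real_of_int dwake + 1)"

definition emp_ineff ::
  "('u \<Rightarrow> 'h \<Rightarrow> hyp \<Rightarrow> nat set) \<Rightarrow> (('u \<times> nat) \<times> 'h) list \<Rightarrow> hyp \<Rightarrow> real" where
  "emp_ineff Cs D lam =
     sum_list (map (\<lambda>((u, c), h). real (card (Cs u h lam))) D) / real (length D)"

definition psi :: "real \<Rightarrow> real \<Rightarrow> nat \<Rightarrow> real" where
  "psi alpha delta N = alpha - sqrt (- ln delta / (2 * real N))"

definition j_stop :: "(hyp \<Rightarrow> real) \<Rightarrow> real \<Rightarrow> hyp list \<Rightarrow> nat" where
  "j_stop LPT thr lams =
     (if \<exists>j\<in>{1..length lams}. LPT (lams ! (j - 1)) > thr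
      then (LEAST j. j \<in> {1..length lams} \<and> LPT (lams ! (j - 1)) > thr)
      else length lams + 1)"

text \<open>The set of all admissible outputs lambda* of DT-LTT (any choice of j* in the argmin).\<close>
definition dtltt_outputs ::
  "(hyp \<Rightarrow> real) \<Rightarrow> (hyp \<Rightarrow> real) \<Rightarrow> real \<Rightarrow> hyp list \<Rightarrow> hyp set" where
  "dtltt_outputs LPT score thr lams =
     (let js = j_stop LPT thr lams in
      if js = 1 then {lam_sec}
      else {lams ! (j - 1) | j. j \<in> {1..js - 1} \<and>
              (\<forall>k\<in>{1..js - 1}. score (lams ! (j - 1)) \<le> score (lams ! (k - 1)))})"

definition exp_loss ::
  "('u \<times> nat) measure \<Rightarrow> 'h measure \<Rightarrow> (nat \<Rightarrow> nat set \<Rightarrow> real)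
   \<Rightarrow> ('u \<Rightarrow> 'h \<Rightarrow> hyp \<Rightarrow> nat set) \<Rightarrow> hyp \<Rightarrow> real" where
  "exp_loss P Ph loss Cs lam =
     (\<integral>x. (case x of ((u, c), h) \<Rightarrow> loss c (Cs u h lam)) \<partial>(P \<Otimes>\<^sub>M Ph))"

end

theory Submission
  imports Defs
begin

(* The fallback lam_sec outputs every label and so has zero risk. The candidate order comes from
   the DT data alone, so it is fixed with respect to the PT data; let lambda_j0 be the first candidate
   whose true risk exceeds alpha. A selected lambda_j precedes the stopping index, so lambda_1, ...,
   lambda_j all passed the test; if its risk exceeds alpha then j0 <= j, hence lambda_j0 passed too,
   i.e. its PT empirical loss was at most psi(alpha, delta). Those PT losses are i.i.d. in [0, 1] with
   mean above alpha, so by Hoeffding's inequality this happens with probability at most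
   exp (-2 N (alpha - psi)^2) = delta. *)

definition sample_mean :: "('a \<Rightarrow> real) \<Rightarrow> nat \<Rightarrow> (nat \<Rightarrow> 'a) \<Rightarrow> real" where
  "sample_mean f N \<omega> = (\<Sum>i<N. f (\<omega> i)) / real N"

lemma measurable_sample_mean:
  assumes [measurable]: "f \<in> borel_measurable M"
  shows "sample_mean f N \<in> borel_measurable (PiM {..<N} (\<lambda>_. M))"
  unfolding sample_mean_def[abs_def] by measurable

lemma sum_list_map_sample: "sum_list (map f (map \<omega> [0..<N])) = (\<Sum>i<N. f (\<omega> i))"
  by (simp add: sum_list_sum_nth lessThan_atLeast0)

lemma emp_loss_sample:
  "emp_loss loss Cs (map \<omega> [0..<N]) lam = sample_mean (\<lambda>((u, c), h). loss c (Cs u h lam)) N \<omega>"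
  unfolding emp_loss_def sample_mean_def sum_list_map_sample by simp

lemma emp_energy_sample:
  "emp_energy Pon Lmax dwake ldet (map \<omega> [0..<N]) lam =
     Pon * (real_of_int Lmax - sample_mean (\<lambda>((u, c), h). real_of_int (ldet u h lam)) N \<omega>
            - real_of_int dwake + 1)"
  unfolding emp_energy_def sample_mean_def sum_list_map_sample by simp

lemma emp_ineff_sample:
  "emp_ineff Cs (map \<omega> [0..<N]) lam = sample_mean (\<lambda>((u, c), h). real (card (Cs u h lam))) N \<omega>"
  unfolding emp_ineff_def sample_mean_def sum_list_map_sample by simp

lemma exp_loss_eq_0_if_covered:
  assumes "\<And>u c h. (u, c) \<in> space P \<Longrightarrow> c \<in> Cs u h lam"
    and "\<And>c S. c \<in> S \<Longrightarrow> loss c S = 0"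
  shows "exp_loss P Ph loss Cs lam = 0"
proof -
  have "exp_loss P Ph loss Cs lam = (\<integral>x. 0 \<partial>(P \<Otimes>\<^sub>M Ph))"
    unfolding exp_loss_def using assms
    by (intro Bochner_Integration.integral_cong) (auto simp: space_pair_measure)
  then show ?thesis
    by simp
qed

lemma indep_vars_PiM_coordinates:
  assumes M: "prob_space M" and I: "I \<noteq> {}"
  shows "prob_space.indep_vars (PiM I (\<lambda>_. M)) (\<lambda>_. M) (\<lambda>i \<omega>. \<omega> i) I"
proof -
  interpret PM: prob_space "PiM I (\<lambda>_. M)"
    by (intro prob_space_PiM M)
  have "distr (PiM I (\<lambda>_. M)) (PiM I (\<lambda>_. M)) (\<lambda>\<omega>. restrict \<omega> I)
      = distr (PiM I (\<lambda>_. M)) (PiM I (\<lambda>_. M)) (\<lambda>\<omega>. \<omega>)"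
    by (intro distr_cong) (auto simp: space_PiM PiE_def extensional_restrict)
  also have "\<dots> = PiM I (\<lambda>_. M)"
    by simp
  also have "\<dots> = PiM I (\<lambda>i. distr (PiM I (\<lambda>_. M)) M (\<lambda>\<omega>. \<omega> i))"
    by (intro PiM_cong refl distr_PiM_component[symmetric] M)
  finally show ?thesis
    using I by (subst PM.indep_vars_iff_distr_eq_PiM') auto
qed

lemma Hoeffding_PiM_mean_le:
  assumes M: "prob_space M" and g: "g \<in> borel_measurable M"
    and g_range: "\<And>x. x \<in> space M \<Longrightarrow> g x \<in> {a..b}" and "a < b"
    and N: "N > 0" and "\<epsilon> \<ge> 0"
  shows "measure (PiM {..<N} (\<lambda>_. M))
           {\<omega> \<in> space (PiM {..<N} (\<lambda>_. M)). sample_mean g N \<omega> \<le> (\<integral>x. g x \<partial>M) - \<epsilon>}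
         \<le> exp (- 2 * real N * \<epsilon>\<^sup>2 / (b - a)\<^sup>2)"
proof -
  let ?PM = "PiM {..<N} (\<lambda>_. M)"
  interpret PM: prob_space ?PM
    by (intro prob_space_PiM M)
  have component: "distr ?PM M (\<lambda>\<omega>. \<omega> i) = M" if "i < N" for i
    using that M by (intro distr_PiM_component) auto
  have distr_g: "distr ?PM borel (\<lambda>\<omega>. g (\<omega> i)) = distr M borel g" if "i < N" for i
  proof -
    have "distr ?PM borel (\<lambda>\<omega>. g (\<omega> i)) = distr (distr ?PM M (\<lambda>\<omega>. \<omega> i)) borel g"
      using that g by (subst distr_distr) (auto simp: comp_def)
    then show ?thesis
      using that by (simp add: component)
  qed
  have indep: "PM.indep_vars (\<lambda>_. borel) (\<lambda>i \<omega>. g (\<omega> i)) {..<N}"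
    using PM.indep_vars_compose2[OF indep_vars_PiM_coordinates[OF M, of "{..<N}"],
        of "\<lambda>_. g" "\<lambda>_. borel"] N g
    by auto
  have mean: "PM.expectation (\<lambda>\<omega>. g (\<omega> 0)) = (\<integral>x. g x \<partial>M)"
    using integral_distr[of "\<lambda>\<omega>. \<omega> 0" ?PM M g] N g by (simp add: component)
  interpret Hoeffding_ineq_iid ?PM "{..<N}" "\<lambda>i \<omega>. g (\<omega> i)" "\<lambda>\<omega>. g (\<omega> 0)" a b
      "PM.expectation (\<lambda>\<omega>. g (\<omega> 0))"
  proof unfold_locales
    show "AE \<omega> in ?PM. g (\<omega> 0) \<in> {a..b}"
      using g_range N by (intro AE_I2) (auto simp: space_PiM)
  qed (use indep distr_g N g in auto)
  show ?thesis
    using Hoeffding_ineq_le'[OF \<open>\<epsilon> \<ge> 0\<close> \<open>a < b\<close>] N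
    by (simp add: mean sample_mean_def lessThan_empty_iff)
qed

lemma prob_sample_mean_le_psi:
  assumes M: "prob_space M" and g: "g \<in> borel_measurable M"
    and g_range: "\<And>x. x \<in> space M \<Longrightarrow> g x \<in> {0..1}"
    and N: "N > 0" and "0 < \<delta>" and risk: "\<alpha> < (\<integral>x. g x \<partial>M)"
  shows "measure (PiM {..<N} (\<lambda>_. M))
           {\<omega> \<in> space (PiM {..<N} (\<lambda>_. M)). sample_mean g N \<omega> \<le> psi \<alpha> \<delta> N}
         \<le> \<delta>"
proof (cases "\<delta> < 1")
  case True
  define s where "s = sqrt (- ln \<delta> / (2 * real N))"
  define \<epsilon> where "\<epsilon> = (\<integral>x. g x \<partial>M) - psi \<alpha> \<delta> N"
  have ln_neg: "ln \<delta> < 0"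
    using \<open>0 < \<delta>\<close> True by simp
  have radicand: "0 \<le> - ln \<delta> / (2 * real N)"
    using ln_neg N by (intro divide_nonneg_pos) auto
  have "0 \<le> s" and "s < \<epsilon>"
    using radicand risk by (auto simp: s_def \<epsilon>_def psi_def)
  then have "s\<^sup>2 \<le> \<epsilon>\<^sup>2"
    by (intro power_mono) auto
  have "exp (- 2 * real N * \<epsilon>\<^sup>2) \<le> exp (- 2 * real N * s\<^sup>2)"
    using \<open>s\<^sup>2 \<le> \<epsilon>\<^sup>2\<close> N by simp
  also have "- 2 * real N * s\<^sup>2 = ln \<delta>"
    using radicand N by (simp add: s_def)
  finally have "exp (- 2 * real N * \<epsilon>\<^sup>2) \<le> \<delta>"
    using \<open>0 < \<delta>\<close> by simp
  moreover have "0 \<le> \<epsilon>"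
    using \<open>0 \<le> s\<close> \<open>s < \<epsilon>\<close> by linarith
  ultimately show ?thesis
    using Hoeffding_PiM_mean_le[OF M g g_range _ N, of \<epsilon>] by (simp add: \<epsilon>_def)
next
  case False
  interpret PM: prob_space "PiM {..<N} (\<lambda>_. M)"
    by (intro prob_space_PiM M)
  show ?thesis
    using PM.prob_le_1 False by (meson le_less_trans not_le)
qed

lemma less_j_stop_iff:
  "j < j_stop LPT thr lams \<longleftrightarrow> j \<le> length lams \<and> (\<forall>i\<in>{1..j}. LPT (lams ! (i - 1)) \<le> thr)"
proof (cases "\<exists>j\<in>{1..length lams}. thr < LPT (lams ! (j - 1))")
  case True
  let ?rejected = "\<lambda>j. j \<in> {1..length lams} \<and> thr < LPT (lams ! (j - 1))"
  define j\<^sub>0 where "j\<^sub>0 = (LEAST j. ?rejected j)"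
  have j_stop: "j_stop LPT thr lams = j\<^sub>0"
    using True by (simp add: j_stop_def j\<^sub>0_def)
  have j\<^sub>0: "?rejected j\<^sub>0"
    using True unfolding j\<^sub>0_def by (metis (mono_tags, lifting) LeastI)
  have before_j\<^sub>0: "\<not> ?rejected i" if "i < j\<^sub>0" for i
    using that unfolding j\<^sub>0_def by (rule not_less_Least)
  have "j \<le> length lams \<and> (\<forall>i\<in>{1..j}. LPT (lams ! (i - 1)) \<le> thr)" if "j < j\<^sub>0"
  proof -
    have "j \<le> length lams"
      using that j\<^sub>0 by simp
    moreover have "LPT (lams ! (i - 1)) \<le> thr" if "i \<in> {1..j}" for i
      using before_j\<^sub>0[of i] that \<open>j < j\<^sub>0\<close> \<open>j \<le> length lams\<close> by auto
    ultimately show ?thesis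
      by blast
  qed
  moreover have "\<not> (\<forall>i\<in>{1..j}. LPT (lams ! (i - 1)) \<le> thr)" if "j\<^sub>0 \<le> j"
  proof
    assume "\<forall>i\<in>{1..j}. LPT (lams ! (i - 1)) \<le> thr"
    then have "LPT (lams ! (j\<^sub>0 - 1)) \<le> thr"
      using j\<^sub>0 that by simp
    then show False
      using j\<^sub>0 by simp
  qed
  ultimately show ?thesis
    unfolding j_stop by (meson not_le)
next
  case False
  then show ?thesis
    by (force simp: j_stop_def not_less)
qed

lemma dtltt_outputs_risk_le_iff:
  assumes "risk lam_sec \<le> \<alpha>"
  shows "(\<forall>lam\<in>dtltt_outputs LPT score thr lams. risk lam \<le> \<alpha>) \<longleftrightarrow>
    (\<forall>j\<in>{1..length lams}. (\<forall>i\<in>{1..j}. LPT (lams ! (i - 1)) \<le> thr) \<and>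
       (\<forall>k\<in>{1..length lams}. (\<forall>i\<in>{1..k}. LPT (lams ! (i - 1)) \<le> thr) \<longrightarrow>
          score (lams ! (j - 1)) \<le> score (lams ! (k - 1)))
       \<longrightarrow> risk (lams ! (j - 1)) \<le> \<alpha>)"
proof -
  let ?admitted = "{j \<in> {1..length lams}. \<forall>i\<in>{1..j}. LPT (lams ! (i - 1)) \<le> thr}"
  have admitted: "{1..j_stop LPT thr lams - 1} = ?admitted"
    using less_j_stop_iff[of _ LPT thr lams] by fastforce
  have "0 < j_stop LPT thr lams"
    by (simp add: less_j_stop_iff)
  then have j_stop_1: "j_stop LPT thr lams = 1 \<longleftrightarrow> ?admitted = {}"
    unfolding admitted[symmetric] by auto
  show ?thesis
  proof (cases "?admitted = {}")
    case True
    then have "dtltt_outputs LPT score thr lams = {lam_sec}"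
      using j_stop_1 by (simp add: dtltt_outputs_def)
    then show ?thesis
      using True assms by auto
  next
    case False
    then have "dtltt_outputs LPT score thr lams =
        {lams ! (j - 1) | j. j \<in> ?admitted \<and>
           (\<forall>k\<in>?admitted. score (lams ! (j - 1)) \<le> score (lams ! (k - 1)))}"
      using j_stop_1 unfolding dtltt_outputs_def Let_def admitted by (simp only: if_False)
    then show ?thesis
      by (simp only: setcompr_eq_image ball_simps) blast
  qed
qed

lemma (in prob_space) dtltt_outputs_risk_le_prob:
  fixes LPT score :: "'a \<Rightarrow> hyp \<Rightarrow> real" and risk :: "hyp \<Rightarrow> real"
  assumes risk_sec: "risk lam_sec \<le> \<alpha>" and "0 \<le> \<delta>"
    and LPT_meas: "\<And>lam. lam \<in> set lams \<Longrightarrow> (\<lambda>\<omega>. LPT \<omega> lam) \<in> borel_measurable M"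
    and score_meas: "\<And>lam. lam \<in> set lams \<Longrightarrow> (\<lambda>\<omega>. score \<omega> lam) \<in> borel_measurable M"
    and test_valid: "\<And>lam. lam \<in> set lams \<Longrightarrow> \<alpha> < risk lam \<Longrightarrow>
                       prob {\<omega> \<in> space M. LPT \<omega> lam \<le> thr} \<le> \<delta>"
  shows "1 - \<delta> \<le> prob {\<omega> \<in> space M. \<forall>lam \<in> dtltt_outputs (LPT \<omega>) (score \<omega>) thr lams. risk lam \<le> \<alpha>}"
proof -
  let ?n = "length lams"
  let ?good = "{\<omega> \<in> space M. \<forall>lam \<in> dtltt_outputs (LPT \<omega>) (score \<omega>) thr lams. risk lam \<le> \<alpha>}"
  have good_eq: "?good = {\<omega> \<in> space M. \<forall>j\<in>{1..?n}. (\<forall>i\<in>{1..j}. LPT \<omega> (lams ! (i - 1)) \<le> thr) \<and>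
       (\<forall>k\<in>{1..?n}. (\<forall>i\<in>{1..k}. LPT \<omega> (lams ! (i - 1)) \<le> thr) \<longrightarrow>
          score \<omega> (lams ! (j - 1)) \<le> score \<omega> (lams ! (k - 1)))
       \<longrightarrow> risk (lams ! (j - 1)) \<le> \<alpha>}"
    using dtltt_outputs_risk_le_iff[where risk = risk, OF risk_sec] by blast
  have [measurable]: "(\<lambda>\<omega>. LPT \<omega> (lams ! (j - 1))) \<in> borel_measurable M"
    and [measurable]: "(\<lambda>\<omega>. score \<omega> (lams ! (j - 1))) \<in> borel_measurable M"
    if "j \<in> {1..?n}" for j
    using that by (auto intro!: LPT_meas score_meas)
  have good_sets: "?good \<in> sets M"
    unfolding good_eq by measurable
  show ?thesis
  proof (cases "\<exists>j\<in>{1..?n}. \<alpha> < risk (lams ! (j - 1))")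
    case False
    then have "?good = space M"
      unfolding good_eq by (auto simp: not_less)
    then show ?thesis
      using \<open>0 \<le> \<delta>\<close> by (simp add: prob_space)
  next
    case True
    define j\<^sub>0 where "j\<^sub>0 = (LEAST j. j \<in> {1..?n} \<and> \<alpha> < risk (lams ! (j - 1)))"
    have j\<^sub>0: "j\<^sub>0 \<in> {1..?n}" "\<alpha> < risk (lams ! (j\<^sub>0 - 1))"
      using True unfolding j\<^sub>0_def by (metis (mono_tags, lifting) LeastI)+
    have j\<^sub>0_least: "j\<^sub>0 \<le> j" if "j \<in> {1..?n}" "\<alpha> < risk (lams ! (j - 1))" for j
      using that unfolding j\<^sub>0_def by (simp add: Least_le)
    let ?passed = "{\<omega> \<in> space M. LPT \<omega> (lams ! (j\<^sub>0 - 1)) \<le> thr}"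
    \<comment> \<open>an output with risk above \<alpha> is some \<open>lams ! (j - 1)\<close> with \<open>j\<^sub>0 \<le> j\<close> whose whole prefix passed\<close>
    have "space M - ?good \<subseteq> ?passed"
      using j\<^sub>0 j\<^sub>0_least unfolding good_eq by (fastforce simp: not_le)
    then have "prob (space M - ?good) \<le> prob ?passed"
      using j\<^sub>0(1) by (intro finite_measure_mono) measurable
    also have "\<dots> \<le> \<delta>"
      using j\<^sub>0 by (intro test_valid) auto
    finally show ?thesis
      using prob_compl[OF good_sets] by linarith
  qed
qed

theorem theorem1:
  fixes P :: "('u \<times> nat) measure" and Ph :: "'h measure"
    and Cs :: "'u \<Rightarrow> 'h \<Rightarrow> hyp \<Rightarrow> nat set"
    and ldet :: "'u \<Rightarrow> 'h \<Rightarrow> hyp \<Rightarrow> int"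
    and loss :: "nat \<Rightarrow> nat set \<Rightarrow> real"
    and C N :: nat
    and DDT :: "('u \<times> nat) list" and htil :: "'h list"
    and lams :: "hyp list"
    and alpha delta gamma Pon :: real and Lmax dwake :: int
  assumes "prob_space P" and "prob_space Ph"
    and "C \<ge> 1"
    and "\<forall>x\<in>space P. snd x \<in> {1..C}"
    and "\<forall>u h lam. Cs u h lam \<subseteq> {1..C}"
    and "\<forall>u h. Cs u h lam_sec = {1..C}"
    and "\<forall>c S. 0 \<le> loss c S \<and> loss c S \<le> 1"
    and "\<forall>c S. c \<in> S \<longrightarrow> loss c S = 0"
    and "\<forall>lam\<in>set lams. (\<lambda>((u, c), h). loss c (Cs u h lam)) \<in> borel_measurable (P \<Otimes>\<^sub>M Ph)"
    and "\<forall>lam\<in>set lams. (\<lambda>((u, c), h). real_of_int (ldet u h lam)) \<in> borel_measurable (P \<Otimes>\<^sub>M Ph)"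
    and "\<forall>lam\<in>set lams. (\<lambda>((u, c), h). real (card (Cs u h lam))) \<in> borel_measurable (P \<Otimes>\<^sub>M Ph)"
    and "length htil = length DDT"
    and "distinct lams"
    and "sorted (map (emp_loss loss Cs (zip DDT htil)) lams)"
    and "N > 0"
    and "0 \<le> alpha" and "alpha \<le> 1" and "0 < delta" and "delta < 1"
    and "gamma \<ge> 0" and "Pon > 0"
  shows "measure (PiM {..<N} (\<lambda>_. P \<Otimes>\<^sub>M Ph))
           {\<omega> \<in> space (PiM {..<N} (\<lambda>_. P \<Otimes>\<^sub>M Ph)).
              \<forall>lam \<in> dtltt_outputs
                       (emp_loss loss Cs (map \<omega> [0..<N]))
                       (\<lambda>lam. emp_energy Pon Lmax dwake ldet (map \<omega> [0..<N]) lam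
                               + gamma * emp_ineff Cs (map \<omega> [0..<N]) lam)
                       (psi alpha delta N) lams.
                exp_loss P Ph loss Cs lam \<le> alpha}
         \<ge> 1 - delta"
proof -
  \<comment> \<open>The candidate order is fixed before the PT data are drawn.\<close>
  let ?M = "P \<Otimes>\<^sub>M Ph"
  interpret M: prob_space ?M
    using assms(1,2) by (rule prob_space_pair)
  interpret PM: prob_space "PiM {..<N} (\<lambda>_. ?M)"
    by (intro prob_space_PiM M.prob_space_axioms)
  have "exp_loss P Ph loss Cs lam_sec = 0"
    using assms(4,6,8) by (intro exp_loss_eq_0_if_covered) force+
  then have risk_sec: "exp_loss P Ph loss Cs lam_sec \<le> alpha"
    using \<open>0 \<le> alpha\<close> by simp
  show ?thesis
  proof (rule PM.dtltt_outputs_risk_le_prob[where risk = "exp_loss P Ph loss Cs", OF risk_sec])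
    show "0 \<le> delta"
      using \<open>0 < delta\<close> by simp
  next
    fix lam assume "lam \<in> set lams"
    note sample_meas = assms(9-11)[rule_format, OF this, THEN measurable_sample_mean[where N = N]]
    show "(\<lambda>\<omega>. emp_loss loss Cs (map \<omega> [0..<N]) lam) \<in> borel_measurable (PiM {..<N} (\<lambda>_. ?M))"
      unfolding emp_loss_sample using sample_meas by measurable
    show "(\<lambda>\<omega>. emp_energy Pon Lmax dwake ldet (map \<omega> [0..<N]) lam + gamma * emp_ineff Cs (map \<omega> [0..<N]) lam)
        \<in> borel_measurable (PiM {..<N} (\<lambda>_. ?M))"
      unfolding emp_energy_sample emp_ineff_sample using sample_meas by measurable
    assume "alpha < exp_loss P Ph loss Cs lam"
    then show "PM.prob {\<omega> \<in> space (PiM {..<N} (\<lambda>_. ?M)).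
        emp_loss loss Cs (map \<omega> [0..<N]) lam \<le> psi alpha delta N} \<le> delta"
      unfolding emp_loss_sample exp_loss_def
      using assms(7,9) \<open>lam \<in> set lams\<close> \<open>N > 0\<close> \<open>0 < delta\<close>
      by (intro prob_sample_mean_le_psi M.prob_space_axioms) (auto simp: case_prod_unfold)
  qed
qed

end
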